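(* Let $\mathbf{S}=(S_n)_{n\in\mathbb{N}}$ be a stationary non-ergodic information source with finite (totally ordered) alphabet $A$ and sequence-space model $(A^{\mathbb{N}},\mathcal{Z},m,\sigma)$, let $\{m_s:s\in A^{\mathbb{N}}\}$ be the ergodic decomposition of $m$, and assume that $s\mapsto h_{m_s}(\mathbf{S})$ is $m$-integrable. If the limit $h^*_m(\mathbf{S})=\lim_{L\to\infty}\frac{1}{L-1}H_m(R_1^L)$ exists, then $h^*_m(\mathbf{S})\ge h_m(\mathbf{S})$ and $h^*_m(\mathbf{S})\ge\int_{A^{\mathbb{N}}}h^*_{m_s}(\mathbf{S})\,dm(s)$.
   Context: $m$ is the shift-invariant probability measure on $A^{\mathbb{N}}$ induced by the process, $\mathcal{Z}$ the product $\sigma$-algebra and $\sigma$ the left shift. The ergodic decomposition is a family of $\sigma$-invariant ergodic probability measures $m_s$ with $m_{\sigma(s)}=m_s$ and $m(C)=\int m_s(C)\,dm(s)$ for all $C\in\mathcal{Z}$. For a shift-invariant measure $\nu$, $h_\nu(\mathbf{S})=\lim_{L\to\infty}\frac1L H_\nu(S_1^L)$ is the metric entropy rate and $h^*_\nu(\mathbf{S})=\lim_{L\to\infty}\frac1{L-1}H_\nu(R_1^L)$ the permutation entropy rate, where $H_\nu$ is Shannon entropy (base 2) under $\nu$, $S_1^L=S_1\cdots S_L$, and $R_n=\sum_{i=1}^n\delta(S_i\le S_n)$ are the rank variables ($\delta(P)=1$ if $P$ holds, else $0$), $R_1^L=R_1\cdots R_L$. *)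

theory Defs
  imports "HOL-Probability.Probability"
begin

text \<open>Sequence space A^N with product sigma-algebra Z; index n :: nat starts at 0,
  so the paper's S_{n+1} is s n.\<close>

definition seq_space :: "(nat \<Rightarrow> 'a) measure" where
  "seq_space = PiM UNIV (\<lambda>_. count_space UNIV)"

definition shift :: "(nat \<Rightarrow> 'a) \<Rightarrow> (nat \<Rightarrow> 'a)" where
  "shift s = (\<lambda>n. s (Suc n))"

definition seq_prob :: "(nat \<Rightarrow> 'a) measure \<Rightarrow> bool" where
  "seq_prob \<nu> \<longleftrightarrow> prob_space \<nu> \<and> sets \<nu> = sets seq_space"

definition shift_invariant :: "(nat \<Rightarrow> 'a) measure \<Rightarrow> bool" where
  "shift_invariant \<nu> \<longleftrightarrow> seq_prob \<nu> \<and> shift \<in> measurable \<nu> \<nu> \<and>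
     (\<forall>C \<in> sets \<nu>. measure \<nu> (shift -` C \<inter> space \<nu>) = measure \<nu> C)"

definition shift_ergodic :: "(nat \<Rightarrow> 'a) measure \<Rightarrow> bool" where
  "shift_ergodic \<nu> \<longleftrightarrow> shift_invariant \<nu> \<and>
     (\<forall>C \<in> sets \<nu>. shift -` C \<inter> space \<nu> = C \<longrightarrow> measure \<nu> C = 0 \<or> measure \<nu> C = 1)"

definition ergodic_decomposition ::
  "(nat \<Rightarrow> 'a) measure \<Rightarrow> ((nat \<Rightarrow> 'a) \<Rightarrow> (nat \<Rightarrow> 'a) measure) \<Rightarrow> bool" where
  "ergodic_decomposition m ms \<longleftrightarrow>
     (\<forall>s \<in> space m. shift_ergodic (ms s) \<and> ms (shift s) = ms s) \<and>
     (\<forall>C \<in> sets m. (\<lambda>s. measure (ms s) C) \<in> borel_measurable m \<and>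
                     measure m C = (\<integral>s. measure (ms s) C \<partial>m))"

definition disc_entropy :: "'b measure \<Rightarrow> ('b \<Rightarrow> 'c) \<Rightarrow> real" where
  "disc_entropy \<nu> f =
     - (\<Sum>v \<in> f ` space \<nu>. let p = measure \<nu> (f -` {v} \<inter> space \<nu>) in p * log 2 p)"

definition block :: "nat \<Rightarrow> (nat \<Rightarrow> 'a) \<Rightarrow> 'a list" where
  "block L s = map s [0..<L]"

text \<open>Rank variable R_{n+1} = sum_{i=1}^{n+1} delta(S_i \<le> S_{n+1}) (0-based index n).\<close>
definition rank :: "(nat \<Rightarrow> 'a::linorder) \<Rightarrow> nat \<Rightarrow> nat" where
  "rank s n = card {i. i \<le> n \<and> s i \<le> s n}"

definition rank_block :: "nat \<Rightarrow> (nat \<Rightarrow> 'a::linorder) \<Rightarrow> nat list" where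
  "rank_block L s = map (rank s) [0..<L]"

definition entropy_rate :: "(nat \<Rightarrow> 'a) measure \<Rightarrow> real" where
  "entropy_rate \<nu> = lim (\<lambda>L. disc_entropy \<nu> (block L) / real L)"

definition perm_entropy_seq :: "(nat \<Rightarrow> 'a::linorder) measure \<Rightarrow> nat \<Rightarrow> real" where
  "perm_entropy_seq \<nu> L = disc_entropy \<nu> (rank_block L) / (real L - 1)"

definition perm_entropy_rate :: "(nat \<Rightarrow> 'a::linorder) measure \<Rightarrow> real" where
  "perm_entropy_rate \<nu> = lim (perm_entropy_seq \<nu>)"

end

theory Submission
  imports Defs "HOL-Real_Asymp.Real_Asymp"
begin

(* A word of length L is determined by its rank vector together with the position of the first
  occurrence of each letter, so H(S_1^L) exceeds H(R_1^L) by at most |A| log (L + 1) = o(L), and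
  it is never smaller.  The block entropies of a stationary measure are subadditive, so by
  Fekete's lemma h = inf H(S_1^L)/L, and the two rates coincide: h* = h for m and for every m_s.
  Concavity of -x log x gives H_m(S_1^L) >= integral of H_{m_s}(S_1^L) dm(s); since
  h_{m_s} <= H_{m_s}(S_1^L)/L, dividing by L and letting L grow shows that the integral of
  h_{m_s} is at most h_m. *)

section \<open>Entropy of simple functions\<close>

lemma (in prob_space) disc_entropy_eq_entropy:
  assumes "simple_function M X"
  shows "disc_entropy M X = entropy 2 (count_space (X ` space M)) X"
proof -
  interpret information_space M 2 by standard simp
  show ?thesis
    using entropy_simple_distributed[OF simple_distributedI[OF assms measure_nonneg refl]]
    by (simp add: disc_entropy_def Let_def)
qed

lemma (in prob_space) disc_entropy_nonneg: "0 \<le> disc_entropy M X"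
proof -
  have "p * log 2 p \<le> 0" if "0 \<le> p" "p \<le> 1" for p :: real
    using that by (cases "p = 0") (auto intro: mult_nonneg_nonpos)
  then show ?thesis
    unfolding disc_entropy_def Let_def by (simp add: sum_nonpos)
qed

lemma (in prob_space) disc_entropy_comp_le:
  assumes "simple_function M X"
  shows "disc_entropy M (f \<circ> X) \<le> disc_entropy M X"
proof -
  interpret information_space M 2 by standard simp
  show ?thesis
    using entropy_data_processing[OF assms, of f] disc_entropy_eq_entropy[OF assms]
      disc_entropy_eq_entropy[OF simple_function_compose[OF assms, of f]]
    by simp
qed

lemma (in prob_space) disc_entropy_comp_inj:
  assumes "simple_function M X" "inj_on f (X ` space M)"
  shows "disc_entropy M (f \<circ> X) = disc_entropy M X"
proof -
  interpret information_space M 2 by standard simp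
  show ?thesis
    using entropy_of_inj[OF assms] disc_entropy_eq_entropy[OF assms(1)]
      disc_entropy_eq_entropy[OF simple_function_compose[OF assms(1), of f]]
    by simp
qed

lemma (in prob_space) disc_entropy_pair_le:
  assumes "simple_function M X" "simple_function M Y"
  shows "disc_entropy M (\<lambda>x. (X x, Y x)) \<le> disc_entropy M X + disc_entropy M Y"
proof -
  interpret information_space M 2 by standard simp
  show ?thesis
    using entropy_chain_rule[OF assms] conditional_entropy_less_eq_entropy[OF assms(2,1)]
      disc_entropy_eq_entropy[OF simple_function_Pair[OF assms]] assms[THEN disc_entropy_eq_entropy]
    by simp
qed

lemma (in prob_space) disc_entropy_le_card:
  assumes "simple_function M X"
  shows "disc_entropy M X \<le> log 2 (card (X ` space M))"
proof -
  interpret information_space M 2 by standard simp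
  show ?thesis
    using entropy_le_card[OF simple_distributedI[OF assms measure_nonneg refl]]
      disc_entropy_eq_entropy[OF assms]
    by simp
qed

section \<open>Blocks and the shift\<close>

lemma space_seq_space [simp]: "space seq_space = UNIV"
  by (simp add: seq_space_def space_PiM)

lemma seq_prob_space: "seq_prob \<nu> \<Longrightarrow> space \<nu> = UNIV"
  unfolding seq_prob_def by (metis sets_eq_imp_space_eq space_seq_space)

lemma seq_prob_prob_space: "seq_prob \<nu> \<Longrightarrow> prob_space \<nu>"
  by (simp add: seq_prob_def)

lemma shift_invariant_seq_prob: "shift_invariant \<nu> \<Longrightarrow> seq_prob \<nu>"
  by (simp add: shift_invariant_def)

lemma block_vimage_singleton_sets: "block L -` {w} \<in> sets seq_space"
proof (cases "length w = L")
  case True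
  then have "block L s = w \<longleftrightarrow> (\<forall>i\<in>{..<L}. s i = w ! i)" for s
    unfolding block_def list_eq_iff_nth_eq by auto
  then have "block L -` {w} = {s \<in> space seq_space. \<forall>i\<in>{..<L}. s i = w ! i}"
    by auto
  also have "\<dots> \<in> sets seq_space"
    unfolding seq_space_def by measurable
  finally show ?thesis .
next
  case False
  then have "block L -` {w} = {}" by (auto simp: block_def)
  then show ?thesis by simp
qed

lemma finite_range_block: "finite (range (block L :: (nat \<Rightarrow> 'a::finite) \<Rightarrow> 'a list))"
proof (rule finite_subset)
  show "range (block L) \<subseteq> {w :: 'a list. set w \<subseteq> UNIV \<and> length w = L}"
    by (auto simp: block_def)
qed (rule finite_lists_length_eq, simp)

lemma simple_function_block:
  fixes \<nu> :: "(nat \<Rightarrow> 'a::finite) measure"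
  assumes "seq_prob \<nu>"
  shows "simple_function \<nu> (block L)"
proof -
  have "space \<nu> = UNIV" "sets \<nu> = sets seq_space"
    using assms by (simp_all add: seq_prob_space) (simp add: seq_prob_def)
  then show ?thesis
    unfolding simple_function_def by (simp add: finite_range_block block_vimage_singleton_sets)
qed

lemma funpow_shift_apply: "(shift ^^ j) s n = s (n + j)"
  by (induction j arbitrary: s n) (simp_all add: shift_def)

lemma surj_funpow_shift: "surj (shift ^^ j)"
proof (rule surjI)
  fix s :: "nat \<Rightarrow> 'a"
  show "(shift ^^ j) (\<lambda>n. s (n - j)) = s"
    by (rule ext) (simp add: funpow_shift_apply)
qed

lemma shift_invariant_funpow:
  assumes inv: "shift_invariant \<nu>" and C: "C \<in> sets \<nu>"
  shows "(shift ^^ j) -` C \<in> sets \<nu>" and "measure \<nu> ((shift ^^ j) -` C) = measure \<nu> C"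
proof -
  have space: "space \<nu> = UNIV"
    using inv by (simp add: shift_invariant_def seq_prob_space)
  have shift: "shift \<in> measurable \<nu> \<nu>"
    using inv by (simp add: shift_invariant_def)
  show sets: "(shift ^^ k) -` C \<in> sets \<nu>" for k
    using measurable_sets[OF measurable_compose_n[OF shift] C] by (simp add: space)
  show "measure \<nu> ((shift ^^ j) -` C) = measure \<nu> C"
  proof (induction j)
    case (Suc j)
    have "measure \<nu> ((shift ^^ Suc j) -` C) = measure \<nu> (shift -` ((shift ^^ j) -` C))"
      by (simp only: funpow_Suc_right vimage_comp)
    also have "\<dots> = measure \<nu> ((shift ^^ j) -` C)"
      using inv sets[of j] by (simp add: shift_invariant_def space)
    also have "\<dots> = measure \<nu> C"
      by (rule Suc.IH)
    finally show ?case .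
  qed simp
qed

lemma disc_entropy_block_shift:
  assumes inv: "shift_invariant \<nu>"
  shows "disc_entropy \<nu> (block L \<circ> shift ^^ j) = disc_entropy \<nu> (block L)"
proof -
  have space: "space \<nu> = UNIV" and sets: "sets \<nu> = sets seq_space"
    using inv by (simp_all add: shift_invariant_def seq_prob_space) (simp add: seq_prob_def)
  have "(block L \<circ> shift ^^ j) ` space \<nu> = block L ` space \<nu>"
    by (simp only: space image_comp[symmetric] surj_funpow_shift)
  moreover have "measure \<nu> ((block L \<circ> shift ^^ j) -` {w} \<inter> space \<nu>) =
      measure \<nu> (block L -` {w} \<inter> space \<nu>)" for w
  proof -
    have "block L -` {w} \<in> sets \<nu>"
      using sets block_vimage_singleton_sets by simp
    from shift_invariant_funpow(2)[OF inv this, of j] show ?thesis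
      by (simp add: space vimage_comp)
  qed
  ultimately show ?thesis
    unfolding disc_entropy_def by (simp only:)
qed

lemma take_block: "k \<le> L \<Longrightarrow> take k (block L s) = block k s"
  by (simp add: block_def take_map)

lemma drop_block: "drop k (block (k + L) s) = block L ((shift ^^ k) s)"
  by (simp add: block_def drop_map funpow_shift_apply map_add_upt[symmetric] add.commute)

lemma block_add: "block (k + L) s = block k s @ block L ((shift ^^ k) s)"
  using append_take_drop_id[of k "block (k + L) s"] by (simp only: take_block[OF le_add1] drop_block)

lemma disc_entropy_block_subadditive:
  fixes \<nu> :: "(nat \<Rightarrow> 'a::finite) measure"
  assumes inv: "shift_invariant \<nu>"
  shows "disc_entropy \<nu> (block (k + L)) \<le> disc_entropy \<nu> (block k) + disc_entropy \<nu> (block L)"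
proof -
  interpret prob_space \<nu>
    using inv by (simp add: shift_invariant_def seq_prob_prob_space)
  have sf: "simple_function \<nu> (block n)" for n
    using inv by (simp add: shift_invariant_def simple_function_block)
  have tail: "block L \<circ> shift ^^ k = drop k \<circ> block (k + L)"
    by (simp add: fun_eq_iff drop_block)
  have sf_tail: "simple_function \<nu> (block L \<circ> shift ^^ k)"
    unfolding tail using sf by simp
  have decomp: "block (k + L) = (\<lambda>(u, v). u @ v) \<circ> (\<lambda>s. (block k s, (block L \<circ> shift ^^ k) s))"
    by (simp add: fun_eq_iff block_add)
  have "disc_entropy \<nu> (block (k + L)) \<le>
      disc_entropy \<nu> (\<lambda>s. (block k s, (block L \<circ> shift ^^ k) s))"
    unfolding decomp by (rule disc_entropy_comp_le[OF simple_function_Pair[OF sf sf_tail]])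
  also have "\<dots> \<le> disc_entropy \<nu> (block k) + disc_entropy \<nu> (block L \<circ> shift ^^ k)"
    by (rule disc_entropy_pair_le[OF sf sf_tail])
  also have "disc_entropy \<nu> (block L \<circ> shift ^^ k) = disc_entropy \<nu> (block L)"
    by (rule disc_entropy_block_shift[OF inv])
  finally show ?thesis .
qed

section \<open>Ranks and first occurrences\<close>

definition list_ranks :: "'a::linorder list \<Rightarrow> nat list" where
  "list_ranks w = map (\<lambda>n. card {i. i \<le> n \<and> w ! i \<le> w ! n}) [0..<length w]"

definition first_index :: "'a list \<Rightarrow> 'a \<Rightarrow> nat option" where
  "first_index w a = (if a \<in> set w then Some (LEAST i. w ! i = a) else None)"

lemma rank_block_eq: "rank_block L = list_ranks \<circ> block L"
  by (auto simp: fun_eq_iff rank_block_def list_ranks_def rank_def block_def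
      intro!: arg_cong[where f = card])

lemma first_index_nth:
  assumes "n < length w" "\<forall>i<n. w ! i \<noteq> w ! n"
  shows "first_index w (w ! n) = Some n"
proof -
  have "(LEAST i. w ! i = w ! n) = n"
    by (rule Least_equality) (use assms in \<open>auto simp: not_less[symmetric]\<close>)
  then show ?thesis
    using assms by (simp add: first_index_def)
qed

lemma first_index_SomeD: "first_index w a = Some n \<Longrightarrow> w ! n = a"
  by (auto simp: first_index_def in_set_conv_nth split: if_splits intro: LeastI)

lemma first_index_in_range: "first_index w a \<in> insert None (Some ` {..<length w})"
proof (cases "a \<in> set w")
  case True
  then obtain i where i: "i < length w" "w ! i = a"
    by (auto simp: in_set_conv_nth)
  then have "(LEAST i. w ! i = a) \<le> i"
    by (intro Least_le) simp
  with True i show ?thesis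
    by (auto simp: first_index_def)
qed (simp add: first_index_def)

lemma rank_less_if_prefix_eq:
  fixes w w' :: "'a::linorder list"
  assumes "\<forall>j<n. w ! j = w' ! j" "w ! n < w' ! n" "k < n" "w ! k = w' ! n"
  shows "card {i. i \<le> n \<and> w ! i \<le> w ! n} < card {i. i \<le> n \<and> w' ! i \<le> w' ! n}"
proof (rule psubset_card_mono)
  let ?A = "{i. i \<le> n \<and> w ! i \<le> w ! n}" and ?B = "{i. i \<le> n \<and> w' ! i \<le> w' ! n}"
  have "w' ! i \<le> w' ! n" if "i \<le> n" "w ! i \<le> w ! n" for i
  proof (cases "i = n")
    case False
    with that have "w' ! i = w ! i"
      using assms(1) by simp
    with that assms(2) show ?thesis
      by simp
  qed simp
  then have "?A \<subseteq> ?B"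
    by blast
  moreover have "k \<in> ?B" "k \<notin> ?A"
    using assms by auto
  ultimately show "?A \<subset> ?B"
    by blast
qed simp

(* Induction on the common prefix: a letter that is new at position n is located by first_index;
  otherwise both candidate letters occurred earlier, and the larger one would raise the rank. *)
lemma list_ranks_first_index_inj:
  fixes w w' :: "'a::linorder list"
  assumes len: "length w' = length w"
    and ranks: "list_ranks w = list_ranks w'" and first: "first_index w = first_index w'"
  shows "w = w'"
proof -
  have rank_eq: "card {i. i \<le> n \<and> w ! i \<le> w ! n} = card {i. i \<le> n \<and> w' ! i \<le> w' ! n}"
    if "n < length w" for n
    using arg_cong[OF ranks, of "\<lambda>r. r ! n"] that len by (simp add: list_ranks_def)
  have "\<forall>j<n. w ! j = w' ! j" if "n \<le> length w" for n
    using that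
  proof (induction n)
    case (Suc n)
    then have prefix: "\<forall>j<n. w ! j = w' ! j" and n: "n < length w" by auto
    have "w ! n = w' ! n"
    proof (cases "\<exists>j<n. w ! j = w ! n \<and> (\<exists>k<n. w' ! k = w' ! n)")
      case True
      then obtain j k where jk: "j < n" "w ! j = w ! n" "k < n" "w' ! k = w' ! n" by blast
      show ?thesis
      proof (rule linorder_cases[of "w ! n" "w' ! n"])
        assume "w ! n < w' ! n"
        from rank_less_if_prefix_eq[OF prefix this jk(3)] jk prefix rank_eq[OF n]
        show ?thesis by simp
      next
        assume "w' ! n < w ! n"
        from rank_less_if_prefix_eq[of n w' w, OF _ this jk(1)] jk prefix rank_eq[OF n]
        show ?thesis by simp
      qed
    next
      case False
      then consider "\<forall>i<n. w ! i \<noteq> w ! n" | "\<forall>i<n. w' ! i \<noteq> w' ! n" by blast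
      then show ?thesis
      proof cases
        case 1
        with n have "first_index w' (w ! n) = Some n"
          by (simp add: first_index_nth first[symmetric])
        then show ?thesis by (simp add: first_index_SomeD)
      next
        case 2
        with n len have "first_index w (w' ! n) = Some n"
          by (simp add: first_index_nth first)
        then show ?thesis by (simp add: first_index_SomeD)
      qed
    qed
    with prefix show ?case
      by (auto simp: less_Suc_eq)
  qed simp
  from this[of "length w"] len show ?thesis
    by (simp add: list_eq_iff_nth_eq)
qed

lemma card_first_index_image_le:
  fixes W :: "'a::finite list set"
  assumes "\<And>w. w \<in> W \<Longrightarrow> length w = L"
  shows "card (first_index ` W) \<le> Suc L ^ CARD('a)"
proof -
  let ?B = "insert None (Some ` {..<L})"
  have "first_index ` W \<subseteq> PiE (UNIV :: 'a set) (\<lambda>_. ?B)"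
    using first_index_in_range assms by (fastforce simp: PiE_def extensional_def)
  then have "card (first_index ` W) \<le> card (PiE (UNIV :: 'a set) (\<lambda>_. ?B))"
    by (rule card_mono[rotated]) (simp add: finite_PiE)
  also have "\<dots> = Suc L ^ CARD('a)"
    by (simp add: card_PiE card_image)
  finally show ?thesis .
qed

section \<open>Permutation entropy versus block entropy\<close>

lemma disc_entropy_rank_block_le:
  fixes \<nu> :: "(nat \<Rightarrow> 'a::{finite,linorder}) measure"
  assumes "seq_prob \<nu>"
  shows "disc_entropy \<nu> (rank_block L) \<le> disc_entropy \<nu> (block L)"
proof -
  interpret prob_space \<nu>
    using assms by (rule seq_prob_prob_space)
  show ?thesis
    unfolding rank_block_eq by (rule disc_entropy_comp_le[OF simple_function_block[OF assms]])
qed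

lemma disc_entropy_block_le_rank_block:
  fixes \<nu> :: "(nat \<Rightarrow> 'a::{finite,linorder}) measure"
  assumes "seq_prob \<nu>"
  shows "disc_entropy \<nu> (block L) \<le> disc_entropy \<nu> (rank_block L) + CARD('a) * log 2 (L + 1)"
proof -
  interpret prob_space \<nu>
    using assms by (rule seq_prob_prob_space)
  have sf: "simple_function \<nu> (block L)"
    using assms by (rule simple_function_block)
  have space: "space \<nu> = UNIV"
    using assms by (rule seq_prob_space)
  have inj: "inj_on (\<lambda>w. (list_ranks w, first_index w)) (block L ` space \<nu>)"
    by (auto intro!: inj_onI list_ranks_first_index_inj simp: block_def)
  have card_pos: "0 < card ((first_index \<circ> block L) ` space \<nu>)"
    using simple_functionD(1)[OF simple_function_compose[OF sf, of first_index]]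
    by (simp add: space card_gt_0_iff)
  have card_le: "card ((first_index \<circ> block L) ` space \<nu>) \<le> Suc L ^ CARD('a)"
    unfolding image_comp[symmetric] by (rule card_first_index_image_le) (auto simp: block_def)
  have "disc_entropy \<nu> (block L) =
      disc_entropy \<nu> ((\<lambda>w. (list_ranks w, first_index w)) \<circ> block L)"
    by (rule disc_entropy_comp_inj[OF sf inj, symmetric])
  also have "\<dots> \<le> disc_entropy \<nu> (rank_block L) + disc_entropy \<nu> (first_index \<circ> block L)"
    using disc_entropy_pair_le[OF simple_function_compose[OF sf] simple_function_compose[OF sf]]
    by (simp add: rank_block_eq comp_def)
  also have "disc_entropy \<nu> (first_index \<circ> block L) \<le>
      log 2 (card ((first_index \<circ> block L) ` space \<nu>))"
    by (rule disc_entropy_le_card[OF simple_function_compose[OF sf]])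
  also have "\<dots> \<le> log 2 (Suc L ^ CARD('a))"
    using card_pos of_nat_mono[OF card_le] by (subst log_le_cancel_iff) simp_all
  also have "log 2 (Suc L ^ CARD('a)) = CARD('a) * log 2 (L + 1)"
    by (simp add: log_nat_power)
  finally show ?thesis by (simp add: add.commute)
qed

lemma LIMSEQ_divide_diff_one_iff:
  fixes a :: "nat \<Rightarrow> real"
  shows "(\<lambda>n. a n / (real n - 1)) \<longlonglongrightarrow> h \<longleftrightarrow> (\<lambda>n. a n / real n) \<longlonglongrightarrow> h"
proof
  assume "(\<lambda>n. a n / (real n - 1)) \<longlonglongrightarrow> h"
  moreover have "(\<lambda>n. (real n - 1) / real n) \<longlonglongrightarrow> 1"
    by real_asymp
  ultimately have "(\<lambda>n. a n / (real n - 1) * ((real n - 1) / real n)) \<longlonglongrightarrow> h"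
    using tendsto_mult by fastforce
  moreover have
    "eventually (\<lambda>n. a n / (real n - 1) * ((real n - 1) / real n) = a n / real n) sequentially"
    using eventually_ge_at_top[of "2::nat"] by eventually_elim simp
  ultimately show "(\<lambda>n. a n / real n) \<longlonglongrightarrow> h"
    by (rule Lim_transform_eventually)
next
  assume "(\<lambda>n. a n / real n) \<longlonglongrightarrow> h"
  moreover have "(\<lambda>n. real n / (real n - 1)) \<longlonglongrightarrow> 1"
    by real_asymp
  ultimately have "(\<lambda>n. a n / real n * (real n / (real n - 1))) \<longlonglongrightarrow> h"
    using tendsto_mult by fastforce
  moreover have
    "eventually (\<lambda>n. a n / real n * (real n / (real n - 1)) = a n / (real n - 1)) sequentially"
    using eventually_ge_at_top[of "2::nat"] by eventually_elim simp
  ultimately show "(\<lambda>n. a n / (real n - 1)) \<longlonglongrightarrow> h"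
    by (rule Lim_transform_eventually)
qed

lemma perm_entropy_seq_LIMSEQ_iff:
  fixes \<nu> :: "(nat \<Rightarrow> 'a::{finite,linorder}) measure"
  assumes "seq_prob \<nu>"
  shows "perm_entropy_seq \<nu> \<longlonglongrightarrow> h \<longleftrightarrow> (\<lambda>L. disc_entropy \<nu> (block L) / L) \<longlonglongrightarrow> h"
proof -
  let ?d = "\<lambda>L. disc_entropy \<nu> (block L) / L - disc_entropy \<nu> (rank_block L) / L"
  let ?b = "\<lambda>L. CARD('a) * log 2 (real L + 1) / L"
  have upper: "?d L \<le> ?b L" for L
    unfolding diff_divide_distrib[symmetric]
    by (rule divide_right_mono) (use disc_entropy_block_le_rank_block[OF assms, of L] in simp_all)
  have lower: "0 \<le> ?d L" for L
    using disc_entropy_rank_block_le[OF assms, of L] by (simp add: diff_divide_distrib[symmetric])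
  have bound_lim: "?b \<longlonglongrightarrow> 0"
    by real_asymp
  have d_lim: "?d \<longlonglongrightarrow> 0"
  proof (rule tendsto_sandwich[OF _ _ tendsto_const bound_lim])
    show "eventually (\<lambda>L. 0 \<le> ?d L) sequentially"
      using lower by (intro always_eventually) blast
    show "eventually (\<lambda>L. ?d L \<le> ?b L) sequentially"
      using upper by (intro always_eventually) blast
  qed
  show ?thesis
    unfolding perm_entropy_seq_def LIMSEQ_divide_diff_one_iff
    by (rule iffI) (erule Lim_transform[OF _ d_lim], erule Lim_transform2[OF _ d_lim])
qed

section \<open>Entropy rates of stationary measures\<close>

lemma LIMSEQ_subadditive_INF:
  fixes a :: "nat \<Rightarrow> real"
  assumes nonneg: "\<And>n. 0 \<le> a n" and subadd: "\<And>m n. a (m + n) \<le> a m + a n"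
  shows "(\<lambda>n. a n / n) \<longlonglongrightarrow> (INF n\<in>{1..}. a n / n)"
proof -
  let ?c = "INF n\<in>{1..}. a n / n"
  have bdd: "bdd_below ((\<lambda>n. a n / n) ` {1..})"
    by (rule bdd_belowI2[of _ 0]) (simp add: nonneg)
  have mult_bound: "a (q * k + r) \<le> q * a k + a r" for q k r
  proof (induction q)
    case (Suc q)
    have "a (Suc q * k + r) \<le> a k + a (q * k + r)"
      using subadd[of k "q * k + r"] by (simp add: add.assoc)
    with Suc show ?case
      by (simp add: algebra_simps)
  qed simp
  show ?thesis
  proof (rule order_tendstoI)
    fix y
    assume "y < ?c"
    then have "y < a n / n" if "1 \<le> n" for n
      using less_cINF_D[OF bdd] that by simp
    then show "eventually (\<lambda>n. y < a n / n) sequentially"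
      using eventually_ge_at_top[of "1::nat"] by (rule eventually_mono[rotated]) simp
  next
    fix y
    assume "?c < y"
    then obtain k where k: "1 \<le> k" "a k / k < y"
      using cINF_less_iff[OF _ bdd] by auto
    define M where "M = Max (a ` {..<k})"
    have bound: "a n / n \<le> a k / k + M / n" if "1 \<le> n" for n
    proof -
      have "real (n div k) * a k = real (n div k * k) * (a k / k)"
        using k by simp
      also have "\<dots> \<le> n * (a k / k)"
        by (rule mult_right_mono) (simp only: of_nat_le_iff div_times_less_eq_dividend, simp add: nonneg)
      finally have "real (n div k) * a k \<le> n * (a k / k)" .
      moreover have "a (n mod k) \<le> M"
        unfolding M_def using k by (intro Max_ge) auto
      ultimately have "a n \<le> n * (a k / k) + M"
        using mult_bound[of "n div k" k "n mod k"] by simp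
      then show ?thesis
        using that by (simp add: field_simps)
    qed
    have "(\<lambda>n. M / real n) \<longlonglongrightarrow> 0"
      by (rule lim_const_over_n)
    then have "eventually (\<lambda>n. M / real n < y - a k / k) sequentially"
      using k by (intro order_tendstoD(2)) auto
    then show "eventually (\<lambda>n. a n / n < y) sequentially"
      using eventually_ge_at_top[of "1::nat"] by eventually_elim (use bound in fastforce)
  qed
qed

lemma LIMSEQ_entropy_rate:
  fixes \<nu> :: "(nat \<Rightarrow> 'a::finite) measure"
  assumes inv: "shift_invariant \<nu>"
  shows "(\<lambda>L. disc_entropy \<nu> (block L) / L) \<longlonglongrightarrow> entropy_rate \<nu>"
    and "entropy_rate \<nu> = (INF L\<in>{1..}. disc_entropy \<nu> (block L) / L)"
proof -
  interpret prob_space \<nu>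
    using inv by (intro seq_prob_prob_space shift_invariant_seq_prob)
  have lim:
    "(\<lambda>L. disc_entropy \<nu> (block L) / L) \<longlonglongrightarrow> (INF L\<in>{1..}. disc_entropy \<nu> (block L) / L)"
    by (rule LIMSEQ_subadditive_INF[OF disc_entropy_nonneg disc_entropy_block_subadditive[OF inv]])
  then show "entropy_rate \<nu> = (INF L\<in>{1..}. disc_entropy \<nu> (block L) / L)"
    unfolding entropy_rate_def by (rule limI)
  with lim show "(\<lambda>L. disc_entropy \<nu> (block L) / L) \<longlonglongrightarrow> entropy_rate \<nu>"
    by (simp only:)
qed

lemma entropy_rate_le_block_entropy:
  fixes \<nu> :: "(nat \<Rightarrow> 'a::finite) measure"
  assumes inv: "shift_invariant \<nu>" and "1 \<le> L"
  shows "entropy_rate \<nu> \<le> disc_entropy \<nu> (block L) / L"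
proof -
  interpret prob_space \<nu>
    using inv by (intro seq_prob_prob_space shift_invariant_seq_prob)
  have "bdd_below ((\<lambda>L. disc_entropy \<nu> (block L) / L) ` {1..})"
    by (rule bdd_belowI2[of _ 0]) (simp add: disc_entropy_nonneg)
  with \<open>1 \<le> L\<close> show ?thesis
    unfolding LIMSEQ_entropy_rate(2)[OF inv] by (intro cINF_lower) simp_all
qed

lemma perm_entropy_rate_eq_entropy_rate:
  fixes \<nu> :: "(nat \<Rightarrow> 'a::{finite,linorder}) measure"
  assumes inv: "shift_invariant \<nu>"
  shows "perm_entropy_rate \<nu> = entropy_rate \<nu>"
proof -
  have "perm_entropy_seq \<nu> \<longlonglongrightarrow> entropy_rate \<nu>"
    using perm_entropy_seq_LIMSEQ_iff[OF shift_invariant_seq_prob[OF inv]]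
      LIMSEQ_entropy_rate(1)[OF inv]
    by (rule iffD2)
  then show ?thesis
    unfolding perm_entropy_rate_def by (rule limI)
qed

section \<open>Concavity and the ergodic decomposition\<close>

lemma neg_mult_ln_le_tangent:
  fixes q t :: real
  assumes "0 \<le> q" "0 < t"
  shows "- (q * ln q) \<le> - (q * ln t) + t - q"
proof (cases "q = 0")
  case False
  with assms have q: "0 < q" by simp
  have "ln (t / q) \<le> t / q - 1"
    using q assms by (intro ln_le_minus_one) simp
  then have "ln t - ln q \<le> t / q - 1"
    using q assms by (simp add: ln_div)
  from mult_left_mono[OF this, of q] q show ?thesis
    by (simp add: algebra_simps)
qed (use assms in simp)

lemma abs_mult_log_le:
  fixes q :: real
  assumes "0 \<le> q" "q \<le> 1"
  shows "\<bar>q * log 2 q\<bar> \<le> 1 / ln 2"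
proof -
  have "- (q * ln q) \<le> 1"
    using neg_mult_ln_le_tangent[OF assms(1), of 1] assms by simp
  moreover have "q * ln q \<le> 0"
    using assms by (cases "q = 0") (auto intro: mult_nonneg_nonpos)
  ultimately have "\<bar>q * ln q\<bar> / ln 2 \<le> 1 / ln 2"
    by (intro divide_right_mono) auto
  then show ?thesis
    by (simp add: log_def abs_mult)
qed

(* Jensen's inequality for the concave function -x log x, via its tangent lines; the library
  version needs an open interval, whereas q may take the values 0 and 1. *)
lemma (in prob_space) integral_neg_mult_log_le:
  fixes q :: "'a \<Rightarrow> real"
  assumes q: "q \<in> borel_measurable M"
    and q_bounds: "\<And>x. x \<in> space M \<Longrightarrow> 0 \<le> q x \<and> q x \<le> 1"
  shows "integrable M (\<lambda>x. - (q x * log 2 (q x)))"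
    and "(\<integral>x. - (q x * log 2 (q x)) \<partial>M) \<le> - ((\<integral>x. q x \<partial>M) * log 2 (\<integral>x. q x \<partial>M))"
proof -
  show int: "integrable M (\<lambda>x. - (q x * log 2 (q x)))"
    by (rule integrable_const_bound[where B = "1 / ln 2"]) (use q q_bounds abs_mult_log_le in auto)
  have q_int: "integrable M q"
    by (rule integrable_const_bound[where B = 1]) (use q q_bounds in auto)
  define p where "p = (\<integral>x. q x \<partial>M)"
  define I where "I = (\<integral>x. - (q x * log 2 (q x)) \<partial>M)"
  have p_nonneg: "0 \<le> p"
    unfolding p_def using q_bounds by (intro Bochner_Integration.integral_nonneg) auto
  have tangent: "I \<le> (- (p * ln t) + t - p) / ln 2" if "0 < t" for t
  proof -
    have "I \<le> (\<integral>x. (- (q x * ln t) + t - q x) / ln 2 \<partial>M)"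
      unfolding I_def
    proof (rule integral_mono[OF int])
      show "integrable M (\<lambda>x. (- (q x * ln t) + t - q x) / ln 2)"
        using q_int by simp
      show "- (q x * log 2 (q x)) \<le> (- (q x * ln t) + t - q x) / ln 2" if "x \<in> space M" for x
      proof -
        have "- (q x * ln (q x)) / ln 2 \<le> (- (q x * ln t) + t - q x) / ln 2"
          using q_bounds[OF that] \<open>0 < t\<close> by (intro divide_right_mono neg_mult_ln_le_tangent) auto
        then show ?thesis
          by (simp add: log_def)
      qed
    qed
    also have "\<dots> = (- (p * ln t) + t - p) / ln 2"
      using q_int by (simp add: p_def prob_space)
    finally show ?thesis .
  qed
  show "I \<le> - (p * log 2 p)" unfolding I_def[symmetric] p_def[symmetric]
  proof (cases "p = 0")
    case True
    have "I \<le> 0 + e" if "0 < e" for e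
      using tangent[of "e * ln 2"] that True by simp
    then show ?thesis
      using True by (simp add: field_le_epsilon)
  next
    case False
    with p_nonneg tangent[of p] show ?thesis
      by (simp add: log_def)
  qed
qed

lemma ergodic_decomposition_shift_invariant:
  assumes "seq_prob m" "ergodic_decomposition m ms"
  shows "shift_invariant (ms s)"
  using assms by (simp add: ergodic_decomposition_def shift_ergodic_def seq_prob_space)

lemma integral_block_entropy_le:
  fixes m :: "(nat \<Rightarrow> 'a::finite) measure"
  assumes m: "seq_prob m" and decomp: "ergodic_decomposition m ms"
  shows "integrable m (\<lambda>s. disc_entropy (ms s) (block L))"
    and "(\<integral>s. disc_entropy (ms s) (block L) \<partial>m) \<le> disc_entropy m (block L)"
proof -
  interpret prob_space m
    using m by (rule seq_prob_prob_space)
  have ms: "seq_prob (ms s)" for s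
    using ergodic_decomposition_shift_invariant[OF m decomp] by (rule shift_invariant_seq_prob)
  define W where "W = range (block L :: (nat \<Rightarrow> 'a) \<Rightarrow> 'a list)"
  define q where "q w s = measure (ms s) (block L -` {w})" for w s
  have block_entropy: "disc_entropy \<nu> (block L) =
      (\<Sum>w\<in>W. - (measure \<nu> (block L -` {w}) * log 2 (measure \<nu> (block L -` {w}))))"
    if "seq_prob \<nu>" for \<nu> :: "(nat \<Rightarrow> 'a) measure"
    using seq_prob_space[OF that] by (simp add: W_def disc_entropy_def Let_def sum_negf)
  have sets: "block L -` {w} \<in> sets m" for w
    using m block_vimage_singleton_sets by (simp add: seq_prob_def)
  have q: "q w \<in> borel_measurable m" "measure m (block L -` {w}) = (\<integral>s. q w s \<partial>m)" for w
    using decomp sets unfolding q_def ergodic_decomposition_def by blast+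
  have q_bounds: "0 \<le> q w s \<and> q w s \<le> 1" for w s
    using ms[of s] by (simp add: q_def seq_prob_def prob_space.prob_le_1)
  note jensen = integral_neg_mult_log_le[OF q(1) q_bounds]
  show "integrable m (\<lambda>s. disc_entropy (ms s) (block L))"
    unfolding block_entropy[OF ms] q_def[symmetric] using jensen(1) by simp
  have "(\<integral>s. disc_entropy (ms s) (block L) \<partial>m) =
      (\<Sum>w\<in>W. (\<integral>s. - (q w s * log 2 (q w s)) \<partial>m))"
    unfolding block_entropy[OF ms] q_def[symmetric] using jensen(1) by (simp add: integral_sum)
  also have "\<dots> \<le> disc_entropy m (block L)"
    unfolding block_entropy[OF m] q(2) by (intro sum_mono jensen(2))
  finally show "(\<integral>s. disc_entropy (ms s) (block L) \<partial>m) \<le> disc_entropy m (block L)" .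
qed

lemma integral_entropy_rate_le:
  fixes m :: "(nat \<Rightarrow> 'a::finite) measure"
  assumes m: "shift_invariant m" and decomp: "ergodic_decomposition m ms"
    and int: "integrable m (\<lambda>s. entropy_rate (ms s))"
  shows "(\<integral>s. entropy_rate (ms s) \<partial>m) \<le> entropy_rate m"
proof (rule LIMSEQ_le_const[OF LIMSEQ_entropy_rate(1)[OF m]], intro exI[of _ 1] allI impI)
  fix L :: nat
  assume "1 \<le> L"
  have m_prob: "seq_prob m"
    using m by (rule shift_invariant_seq_prob)
  have "(\<integral>s. entropy_rate (ms s) \<partial>m) \<le> (\<integral>s. disc_entropy (ms s) (block L) / L \<partial>m)"
  proof (rule integral_mono[OF int])
    show "integrable m (\<lambda>s. disc_entropy (ms s) (block L) / L)"
      using integral_block_entropy_le(1)[OF m_prob decomp] by simp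
    show "entropy_rate (ms s) \<le> disc_entropy (ms s) (block L) / L" for s
      using ergodic_decomposition_shift_invariant[OF m_prob decomp] \<open>1 \<le> L\<close>
      by (rule entropy_rate_le_block_entropy)
  qed
  also have "\<dots> \<le> disc_entropy m (block L) / L"
    using integral_block_entropy_le(2)[OF m_prob decomp] by (simp add: divide_right_mono)
  finally show "(\<integral>s. entropy_rate (ms s) \<partial>m) \<le> disc_entropy m (block L) / L" .
qed

theorem corollary1:
  fixes m :: "(nat \<Rightarrow> 'a::{finite,linorder}) measure"
    and ms :: "(nat \<Rightarrow> 'a) \<Rightarrow> (nat \<Rightarrow> 'a) measure"
  assumes "shift_invariant m"
    and "\<not> shift_ergodic m"
    and "ergodic_decomposition m ms"
    and "integrable m (\<lambda>s. entropy_rate (ms s))"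
    and "convergent (perm_entropy_seq m)"
  shows "perm_entropy_rate m \<ge> entropy_rate m \<and>
         perm_entropy_rate m \<ge> (\<integral>s. perm_entropy_rate (ms s) \<partial>m)"
proof -
  have "shift_invariant (ms s)" for s
    using shift_invariant_seq_prob[OF assms(1)] assms(3)
    by (rule ergodic_decomposition_shift_invariant)
  then have "(\<integral>s. perm_entropy_rate (ms s) \<partial>m) = (\<integral>s. entropy_rate (ms s) \<partial>m)"
    by (simp add: perm_entropy_rate_eq_entropy_rate)
  also have "\<dots> \<le> entropy_rate m"
    using assms(1,3,4) by (rule integral_entropy_rate_le)
  finally show ?thesis
    using perm_entropy_rate_eq_entropy_rate[OF assms(1)] by simp
qed

end
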